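(* In the standing setting below, let $2\leq\ell\leq k-2$ and define $M^0$ as the set of $k$-cycles $(x_1,\dots,x_k)\in X_1\times\dots\times X_k$ such that $(x_1,\dots,x_\ell)$ is a bad $[\ell]$-tuple and $(x_1,\dots,x_{\ell-1})$ is not a bad $[\ell-1]$-tuple. For $j=\ell+2,\dots,k$ let $M_j$ be the set of $(x_1,\dots,x_k)\in M^0$ such that $(x_1,\dots,x_{\ell-1},x_j)$ is not a bad $([\ell-1]\cup\{j\})$-tuple, and let $M'=M^0\setminus(M_{\ell+2}\cup\dots\cup M_k)$. Then $|M'|\leq\frac12|M^0|$.
   Context: Let $p$ be a fixed prime, $n\geq1$, $N=p^n$, $[m]=\{1,\dots,m\}$. For sets $X_1,\dots,X_k\subseteq\mathbb{F}_p^n$, a $k$-cycle is a tuple $(x_1,\dots,x_k)\in X_1\times\dots\times X_k$ with $x_1+\dots+x_k=0$. Standing setting: $k\geq4$, $X_1,\dots,X_k\subseteq\mathbb{F}_p^n$, the number of $k$-cycles in $X_1\times\dots\times X_k$ equals $\delta'N^{k-1}$ with $\delta'>0$, and $\theta\geq 1$ is such that for each $i\in[k]$ every point of $X_i$ occurs as $x_i$ in at most $\theta\delta'N^{k-2}$ $k$-cycles. Put $\alpha=(\theta\delta')^{1/(k-2)}$. For $I\subseteq[k]$ with $1\leq|I|\leq k-2$, an $I$-tuple is an element $(x_i)_{i\in I}\in\prod_{i\in I}X_i$; it is called bad if there are at least $2\alpha^{k-|I|-1}N^{k-|I|-1}$ $k$-cycles $(x_1,\dots,x_k)\in X_1\times\dots\times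 X_k$ whose coordinates indexed by $I$ coincide with the given tuple. *)

theory Defs
  imports "HOL-Analysis.Finite_Cartesian_Product" "Berlekamp_Zassenhaus.Finite_Field"
begin

text \<open>The ambient group F_p^n is modelled as the type ('p mod_ring)^'n with 'p of
  class prime_card (so CARD('p) = p is prime) and 'n a finite index type (n = CARD('n) >= 1).
  A tuple (x_1,...,x_k) is an extensional function on {1..k}.\<close>

definition kcycles :: "nat \<Rightarrow> (nat \<Rightarrow> ('p::prime_card mod_ring ^ 'n) set)
    \<Rightarrow> (nat \<Rightarrow> 'p mod_ring ^ 'n) set" where
  "kcycles k X = {x \<in> PiE {1..k} X. (\<Sum>i\<in>{1..k}. x i) = 0}"

definition ext_count :: "nat \<Rightarrow> (nat \<Rightarrow> ('p::prime_card mod_ring ^ 'n) set) \<Rightarrow> nat set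
    \<Rightarrow> (nat \<Rightarrow> 'p mod_ring ^ 'n) \<Rightarrow> nat" where
  "ext_count k X I y = card {x \<in> kcycles k X. \<forall>i\<in>I. x i = y i}"

definition bad_tuple :: "nat \<Rightarrow> (nat \<Rightarrow> ('p::prime_card mod_ring ^ 'n) set) \<Rightarrow> real \<Rightarrow> real
    \<Rightarrow> nat set \<Rightarrow> (nat \<Rightarrow> 'p mod_ring ^ 'n) \<Rightarrow> bool" where
  "bad_tuple k X \<alpha> N I y \<longleftrightarrow> y \<in> PiE I X \<and>
     real (ext_count k X I y) \<ge> 2 * \<alpha> ^ (k - card I - 1) * N ^ (k - card I - 1)"

end

theory Submission
  imports Defs
begin

text \<open>Fix the first \<open>l\<close> coordinates \<open>u\<close> of a cycle in \<open>M\<^sup>0\<close>. Since \<open>u\<close> is bad, the cycles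
  extending \<open>u\<close> (all of which lie in \<open>M\<^sup>0\<close>) number at least \<open>2(\<alpha>N)\<^sup>k\<^sup>-\<^sup>l\<^sup>-\<^sup>1\<close>. For a cycle of
  \<open>M'\<close> extending \<open>u\<close> and \<open>j \<ge> l+2\<close>, the tuple \<open>(x\<^sub>1,\<dots>,x\<^sub>l\<^sub>-\<^sub>1,x\<^sub>j)\<close> is bad, so every value taken
  by \<open>x\<^sub>j\<close> accounts for \<open>2(\<alpha>N)\<^sup>k\<^sup>-\<^sup>l\<^sup>-\<^sup>2\<close> extensions of the non-bad tuple \<open>(x\<^sub>1,\<dots>,x\<^sub>l\<^sub>-\<^sub>1)\<close>,
  which has fewer than \<open>2(\<alpha>N)\<^sup>k\<^sup>-\<^sup>l\<^sup>-\<^sup>1\<close> extensions; hence \<open>x\<^sub>j\<close> takes fewer than \<open>\<alpha>N\<close> values.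
  As \<open>x\<^sub>l\<^sub>+\<^sub>1\<close> is determined by the other coordinates, at most \<open>(\<alpha>N)\<^sup>k\<^sup>-\<^sup>l\<^sup>-\<^sup>1\<close> cycles of \<open>M'\<close>
  extend \<open>u\<close>: at most half of those of \<open>M\<^sup>0\<close>.\<close>

lemma card_le_half_by_fibres:
  assumes "finite A" "B \<subseteq> A"
    and "\<And>x. x \<in> A \<Longrightarrow> 2 * card {y \<in> B. g y = g x} \<le> card {y \<in> A. g y = g x}"
  shows "2 * card B \<le> card A"
proof -
  have fibres: "card C = (\<Sum>u\<in>g ` A. card {y \<in> C. g y = u})" if "C \<subseteq> A" for C
  proof -
    have "finite C"
      using finite_subset[OF that \<open>finite A\<close>] .
    then show ?thesis
      using sum.group[of C "g ` A" g "\<lambda>_. 1 :: nat"] \<open>finite A\<close> image_mono[OF that, of g] by simp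
  qed
  have "2 * card B = (\<Sum>u\<in>g ` A. 2 * card {y \<in> B. g y = u})"
    by (simp add: fibres[OF \<open>B \<subseteq> A\<close>] sum_distrib_left)
  also have "\<dots> \<le> (\<Sum>u\<in>g ` A. card {y \<in> A. g y = u})"
    using assms(3) by (intro sum_mono) auto
  also have "\<dots> = card A"
    by (simp add: fibres)
  finally show ?thesis .
qed

lemma card_mult_le_card_by_fibres:
  fixes m :: real
  assumes "finite E" "finite B" "\<And>z. z \<in> B \<Longrightarrow> m \<le> card {w \<in> E. f w = z}"
  shows "card B * m \<le> card E"
proof -
  have "card B * m \<le> (\<Sum>z\<in>B. real (card {w \<in> E. f w = z}))"
    using sum_mono[of B "\<lambda>_. m"] assms(3) by simp
  also have "\<dots> = card (\<Union>z\<in>B. {w \<in> E. f w = z})"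
    using assms(1,2) by (subst card_UN_disjoint) auto
  also have "\<dots> \<le> card E"
    using assms(1) by (intro of_nat_mono card_mono) auto
  finally show ?thesis .
qed

lemma restrict_eq_restrict_iff: "restrict f A = restrict g A \<longleftrightarrow> (\<forall>x\<in>A. f x = g x)"
  by (metis restrict_apply' restrict_ext)

definition extensions :: "nat \<Rightarrow> (nat \<Rightarrow> ('p::prime_card mod_ring ^ 'n) set) \<Rightarrow> nat set
    \<Rightarrow> (nat \<Rightarrow> 'p mod_ring ^ 'n) \<Rightarrow> (nat \<Rightarrow> 'p mod_ring ^ 'n) set" where
  "extensions k X I y = {x \<in> kcycles k X. \<forall>i\<in>I. x i = y i}"

lemma finite_kcycles: "finite (kcycles k X)"
proof -
  have "kcycles k X \<subseteq> PiE {1..k} (\<lambda>_. UNIV)"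
    unfolding kcycles_def by (auto simp: PiE_def Pi_def)
  then show ?thesis
    by (rule finite_subset) (simp add: finite_PiE)
qed

lemma finite_extensions: "finite (extensions k X I y)"
  unfolding extensions_def by (rule finite_subset[OF _ finite_kcycles]) auto

lemma extensions_antimono: "I \<subseteq> J \<Longrightarrow> extensions k X J y \<subseteq> extensions k X I y"
  unfolding extensions_def by auto

lemma bad_tuple_restrict_iff:
  assumes "x \<in> kcycles k X" "I \<subseteq> {1..k}"
  shows "bad_tuple k X \<alpha> N I (restrict x I) \<longleftrightarrow>
           2 * (\<alpha> * N) ^ (k - card I - 1) \<le> card (extensions k X I x)"
proof -
  have "restrict x I \<in> PiE I X"
    using assms unfolding kcycles_def by (auto simp: PiE_def Pi_def)
  moreover have "ext_count k X I (restrict x I) = card (extensions k X I x)"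
    unfolding ext_count_def extensions_def by simp
  ultimately show ?thesis
    unfolding bad_tuple_def by (simp add: power_mult_distrib mult.assoc)
qed

lemma kcycles_eq_if_agree_off:
  assumes "x \<in> kcycles k X" "y \<in> kcycles k X" "i \<in> {1..k}"
    and agree: "\<And>m. m \<in> {1..k} - {i} \<Longrightarrow> x m = y m"
  shows "x = y"
proof -
  have "x i + (\<Sum>m\<in>{1..k} - {i}. x m) = y i + (\<Sum>m\<in>{1..k} - {i}. y m)"
    using assms(1,2) sum.remove[OF _ \<open>i \<in> {1..k}\<close>, of x] sum.remove[OF _ \<open>i \<in> {1..k}\<close>, of y]
    unfolding kcycles_def by simp
  moreover have "(\<Sum>m\<in>{1..k} - {i}. x m) = (\<Sum>m\<in>{1..k} - {i}. y m)"
    using agree by (rule sum.cong[OF refl])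
  ultimately have "x i = y i" by simp
  with assms show ?thesis
    unfolding kcycles_def by (intro PiE_ext[of x "{1..k}" X]) auto
qed

lemma card_kcycles_le_prod_card_values:
  assumes "G \<subseteq> kcycles k X" "i \<in> {1..k}" "finite J"
    and agree: "\<And>x y m. x \<in> G \<Longrightarrow> y \<in> G \<Longrightarrow> m \<in> {1..k} - insert i J \<Longrightarrow> x m = y m"
  shows "card G \<le> (\<Prod>j\<in>J. card ((\<lambda>x. x j) ` G))"
proof -
  have "inj_on (\<lambda>x. restrict x J) G"
  proof
    fix x y assume "x \<in> G" "y \<in> G" "restrict x J = restrict y J"
    then show "x = y"
      using assms(1,2) agree[OF \<open>x \<in> G\<close> \<open>y \<in> G\<close>]
      by (intro kcycles_eq_if_agree_off[of x k X y i]) (auto, metis restrict_apply')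
  qed
  moreover have "(\<lambda>x. restrict x J) ` G \<subseteq> PiE J (\<lambda>j. (\<lambda>x. x j) ` G)"
    by auto
  moreover have "finite (PiE J (\<lambda>j. (\<lambda>x. x j) ` G))"
    using assms(1,3) finite_subset[OF assms(1) finite_kcycles] by (simp add: finite_PiE)
  ultimately show ?thesis
    by (metis card_inj_on_le card_PiE[OF \<open>finite J\<close>])
qed

lemma card_values_lt_if_bad_extensions:
  fixes \<alpha> N :: real
  assumes x0: "x0 \<in> kcycles k X" and A: "A \<subseteq> {1..k}" "card A + 2 \<le> k"
    and j: "j \<in> {1..k} - A" and pos: "\<alpha> * N > 0"
    and not_bad: "\<not> bad_tuple k X \<alpha> N A (restrict x0 A)"
    and G: "G \<subseteq> extensions k X A x0"
    and bad: "\<And>x. x \<in> G \<Longrightarrow> bad_tuple k X \<alpha> N (A \<union> {j}) (restrict x (A \<union> {j}))"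
  shows "card ((\<lambda>x. x j) ` G) < \<alpha> * N"
proof -
  define d where "d = k - card A - 2"
  have card_Aj: "card (A \<union> {j}) = card A + 1"
    using A j finite_subset[OF A(1)] by simp
  have "2 * (\<alpha> * N) ^ d \<le> card {w \<in> extensions k X A x0. w j = z}"
    if z: "z \<in> (\<lambda>x. x j) ` G" for z
  proof -
    obtain x where x: "x \<in> G" "z = x j"
      using z by blast
    then have "{w \<in> extensions k X A x0. w j = z} = extensions k X (A \<union> {j}) x"
      using G unfolding extensions_def by auto
    moreover have "x \<in> kcycles k X"
      using x G unfolding extensions_def by auto
    ultimately show ?thesis
      using bad[OF x(1)] bad_tuple_restrict_iff[of x k X "A \<union> {j}"] A j card_Aj
      unfolding d_def by auto
  qed
  then have "card ((\<lambda>x. x j) ` G) * (2 * (\<alpha> * N) ^ d) \<le> card (extensions k X A x0)"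
    using finite_subset[OF G finite_extensions]
    by (intro card_mult_le_card_by_fibres[OF finite_extensions, where f="\<lambda>w. w j"]) auto
  also have "\<dots> < 2 * (\<alpha> * N) ^ Suc d"
    using not_bad bad_tuple_restrict_iff[OF x0 A(1)] A(2) unfolding d_def
    by (simp add: Suc_diff_Suc numeral_2_eq_2)
  finally show ?thesis
    using pos by (simp add: mult.commute mult.left_commute)
qed

lemma card_extensions_with_bad_pairs_le:
  fixes \<alpha> N :: real
  assumes x0: "x0 \<in> kcycles k X" and l: "l + 2 \<le> k" and pos: "\<alpha> * N > 0"
    and not_bad: "\<not> bad_tuple k X \<alpha> N {1..l-1} (restrict x0 {1..l-1})"
    and G: "G \<subseteq> extensions k X {1..l} x0"
    and bad: "\<And>x j. x \<in> G \<Longrightarrow> j \<in> {l+2..k} \<Longrightarrow>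
                bad_tuple k X \<alpha> N ({1..l-1} \<union> {j}) (restrict x ({1..l-1} \<union> {j}))"
  shows "card G \<le> (\<alpha> * N) ^ (k - l - 1)"
proof -
  have "G \<subseteq> kcycles k X"
    using G unfolding extensions_def by auto
  moreover have "{1..k} - insert (l+1) {l+2..k} = {1..l}"
    using l by auto
  then have "\<And>x y m. x \<in> G \<Longrightarrow> y \<in> G \<Longrightarrow> m \<in> {1..k} - insert (l+1) {l+2..k} \<Longrightarrow> x m = y m"
    using G unfolding extensions_def by (metis (mono_tags, lifting) mem_Collect_eq subsetD)
  ultimately have "card G \<le> (\<Prod>j\<in>{l+2..k}. card ((\<lambda>x. x j) ` G))"
    using l by (intro card_kcycles_le_prod_card_values[of G k X "l+1"]) auto
  then have "card G \<le> (\<Prod>j\<in>{l+2..k}. real (card ((\<lambda>x. x j) ` G)))"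
    by (metis of_nat_le_iff of_nat_prod)
  also have "\<dots> \<le> (\<Prod>j\<in>{l+2..k}. \<alpha> * N)"
  proof (intro prod_mono conjI)
    fix j assume j: "j \<in> {l+2..k}"
    have G': "G \<subseteq> extensions k X {1..l-1} x0"
      using G extensions_antimono[of "{1..l-1}" "{1..l}" k X x0] by auto
    have A: "{1..l-1} \<subseteq> {1..k}" "card {1..l-1} + 2 \<le> k" and j': "j \<in> {1..k} - {1..l-1}"
      using l j by auto
    show "card ((\<lambda>x. x j) ` G) \<le> \<alpha> * N"
      using card_values_lt_if_bad_extensions[OF x0 A j' pos not_bad G' bad[OF _ j]] by simp
  qed simp
  also have "\<dots> = (\<alpha> * N) ^ (k - l - 1)"
    by simp
  finally show ?thesis .
qed

definition bad_prefix_cycles :: "nat \<Rightarrow> (nat \<Rightarrow> ('p::prime_card mod_ring ^ 'n) set) \<Rightarrow> real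
    \<Rightarrow> real \<Rightarrow> nat \<Rightarrow> (nat \<Rightarrow> 'p mod_ring ^ 'n) set" where
  "bad_prefix_cycles k X \<alpha> N l = {x \<in> kcycles k X.
     bad_tuple k X \<alpha> N {1..l} (restrict x {1..l}) \<and>
     \<not> bad_tuple k X \<alpha> N {1..l-1} (restrict x {1..l-1})}"

lemma bad_prefix_cycles_fibre:
  assumes "x \<in> bad_prefix_cycles k X \<alpha> N l"
  shows "{y \<in> bad_prefix_cycles k X \<alpha> N l. restrict y {1..l} = restrict x {1..l}} =
           extensions k X {1..l} x"
proof -
  have "y \<in> bad_prefix_cycles k X \<alpha> N l" if "y \<in> kcycles k X" "\<forall>i\<in>{1..l}. y i = x i" for y
  proof -
    have "restrict y I = restrict x I" if "I \<subseteq> {1..l}" for I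
      using \<open>\<forall>i\<in>{1..l}. y i = x i\<close> that by (auto simp: restrict_eq_restrict_iff)
    then show ?thesis
      using assms \<open>y \<in> kcycles k X\<close> unfolding bad_prefix_cycles_def by simp
  qed
  then show ?thesis
    unfolding extensions_def restrict_eq_restrict_iff using bad_prefix_cycles_def by blast
qed

lemma card_bad_prefix_cycles_with_bad_pairs_le_half:
  fixes X :: "nat \<Rightarrow> ('p::prime_card mod_ring ^ 'n) set" and \<alpha> N :: real
  assumes l: "l + 2 \<le> k" and pos: "\<alpha> * N > 0"
  defines "M0 \<equiv> bad_prefix_cycles k X \<alpha> N l"
  shows "2 * card {x \<in> M0. \<forall>j\<in>{l+2..k}.
                     bad_tuple k X \<alpha> N ({1..l-1} \<union> {j}) (restrict x ({1..l-1} \<union> {j}))}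
           \<le> card M0" (is "2 * card ?M' \<le> _")
proof (rule card_le_half_by_fibres[where g="\<lambda>y. restrict y {1..l}"])
  show "finite M0"
    unfolding M0_def bad_prefix_cycles_def by (rule finite_subset[OF _ finite_kcycles]) blast
  show "?M' \<subseteq> M0"
    by blast
next
  fix x assume "x \<in> M0"
  then have fibre: "{y \<in> M0. restrict y {1..l} = restrict x {1..l}} = extensions k X {1..l} x"
    unfolding M0_def by (rule bad_prefix_cycles_fibre)
  have x: "x \<in> kcycles k X"
    using \<open>x \<in> M0\<close> unfolding M0_def bad_prefix_cycles_def by simp
  let ?G = "{y \<in> ?M'. restrict y {1..l} = restrict x {1..l}}"
  have "2 * (\<alpha> * N) ^ (k - l - 1) \<le> card (extensions k X {1..l} x)"
    using \<open>x \<in> M0\<close> bad_tuple_restrict_iff[OF x, of "{1..l}"] l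
    unfolding M0_def bad_prefix_cycles_def by simp
  moreover have "card ?G \<le> (\<alpha> * N) ^ (k - l - 1)"
  proof (rule card_extensions_with_bad_pairs_le[OF x l pos])
    show "\<not> bad_tuple k X \<alpha> N {1..l-1} (restrict x {1..l-1})"
      using \<open>x \<in> M0\<close> unfolding M0_def bad_prefix_cycles_def by simp
    show "?G \<subseteq> extensions k X {1..l} x"
      using fibre by blast
  qed auto
  ultimately have "real (2 * card ?G) \<le> card {y \<in> M0. restrict y {1..l} = restrict x {1..l}}"
    using fibre by simp
  then show "2 * card ?G \<le> card {y \<in> M0. restrict y {1..l} = restrict x {1..l}}"
    by (simp only: of_nat_le_iff)
qed

theorem lemma7:
  fixes X :: "nat \<Rightarrow> ('p::prime_card mod_ring ^ 'n) set"
    and k l :: nat and \<delta>' \<theta> :: real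
  defines "N \<equiv> real (CARD('p) ^ CARD('n))"
  defines "\<alpha> \<equiv> root (k - 2) (\<theta> * \<delta>')"
  defines "M0 \<equiv> {x \<in> kcycles k X.
              bad_tuple k X \<alpha> N {1..l} (restrict x {1..l}) \<and>
              \<not> bad_tuple k X \<alpha> N {1..l-1} (restrict x {1..l-1})}"
  defines "M \<equiv> (\<lambda>j. {x \<in> M0.
              \<not> bad_tuple k X \<alpha> N ({1..l-1} \<union> {j}) (restrict x ({1..l-1} \<union> {j}))})"
  assumes k: "k \<ge> 4"
    and cnt: "real (card (kcycles k X)) = \<delta>' * N ^ (k - 1)"
    and dpos: "\<delta>' > 0"
    and th: "\<theta> \<ge> 1"
    and deg: "\<And>i a. i \<in> {1..k} \<Longrightarrow> a \<in> X i \<Longrightarrow>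
               real (card {x \<in> kcycles k X. x i = a}) \<le> \<theta> * \<delta>' * N ^ (k - 2)"
    and l: "2 \<le> l" "l \<le> k - 2"
  shows "real (card (M0 - (\<Union>j\<in>{l+2..k}. M j))) \<le> real (card M0) / 2"
proof -
  have "\<alpha> * N > 0"
    unfolding \<alpha>_def N_def using k th dpos by (simp add: real_root_gt_zero)
  then have "2 * card {x \<in> M0. \<forall>j\<in>{l+2..k}.
               bad_tuple k X \<alpha> N ({1..l-1} \<union> {j}) (restrict x ({1..l-1} \<union> {j}))} \<le> card M0"
    using card_bad_prefix_cycles_with_bad_pairs_le_half[of l k \<alpha> N X] l
    unfolding M0_def bad_prefix_cycles_def by simp
  moreover have "M0 - (\<Union>j\<in>{l+2..k}. M j) = {x \<in> M0. \<forall>j\<in>{l+2..k}.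
               bad_tuple k X \<alpha> N ({1..l-1} \<union> {j}) (restrict x ({1..l-1} \<union> {j}))}"
    unfolding M_def by blast
  ultimately show ?thesis
    by simp
qed

end
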